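(* Let $n_d\ge 1$ and for $i=1,\dots,n_d$ let $S_i>0$, $\overline{P_i}\in(0,1]$ and $\theta_i\in[0,\pi/2]$. For $S>0$, $\overline{P}\in(0,1]$, $\theta\in[0,\pi/2]$ define $\mathcal{X}(S,\overline{P},\theta)=\{(P,Q)\in\mathbb{R}^2: 0\le P\le S\overline{P},\ Q^2\le S^2-P^2,\ |Q|\le\tan(\theta)P\}$, where for $\theta=\pi/2$ the constraint $|Q|\le\tan(\theta)P$ is omitted. Let $S_0=\min_i S_i$, $\overline{P_0}=\min_i\overline{P_i}$, $\theta_0=\min_i\theta_i$. Then $$\mathcal{X}(n_dS_0,\overline{P_0},\theta_0)\subseteq\bigoplus_{i=1}^{n_d}\mathcal{X}(S_i,\overline{P_i},\theta_i),$$ and equality holds if and only if all parameters are homogeneous, i.e. $S_i=S_0$, $\overline{P_i}=\overline{P_0}$ and $\theta_i=\theta_0$ for all $i$.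
   Context: $\oplus$ denotes the Minkowski sum $A\oplus B=\{a+b: a\in A, b\in B\}$. The set $\mathcal{X}(S,\overline{P},\theta)$ is the feasible real/reactive power set of a photovoltaic inverter with apparent power rating $S$, normalized available real power $\overline{P}$ (normalized with respect to $S$), and minimum power factor $\cos\theta$. *)

theory Defs
  imports "HOL-Analysis.Analysis"
begin

text \<open>Feasible real/reactive power set of a PV inverter with rating S, normalized
available real power Pbar and minimum power factor cos theta. For theta = pi/2 the
power factor constraint is omitted.\<close>
definition feas :: "real \<Rightarrow> real \<Rightarrow> real \<Rightarrow> (real \<times> real) set" where
  "feas S Pbar \<theta> = {(P, Q). 0 \<le> P \<and> P \<le> S * Pbar \<and> Q\<^sup>2 \<le> S\<^sup>2 - P\<^sup>2 \<and>
                          (\<theta> = pi / 2 \<or> \<bar>Q\<bar> \<le> tan \<theta> * P)}"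

definition minkowski_sum :: "nat \<Rightarrow> (nat \<Rightarrow> 'a::comm_monoid_add set) \<Rightarrow> 'a set" where
  "minkowski_sum n X = {(\<Sum>i<n. x i) | x. \<forall>i<n. x i \<in> X i}"

end

theory Submission
  imports Defs
begin

text \<open>The constraints defining \<open>feas S Pb \<theta>\<close> (the disk of radius \<open>S\<close>, the strip
\<open>0 \<le> P \<le> S Pb\<close> and the cone \<open>\<bar>Q\<bar> \<le> tan \<theta> P\<close>) are positively homogeneous in
\<open>(P, Q, S)\<close> and subadditive, so \<open>n\<close> copies of \<open>feas S0 P0 \<theta>0\<close> add up to exactly
\<open>feas (n S0) P0 \<theta>0\<close>, and monotonicity in the parameters gives the inclusion. If some
\<open>S i Pb i\<close> exceeds \<open>S0 P0\<close>, summing the points of largest real power leaves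
\<open>feas (n S0) P0 \<theta>0\<close>; if some \<open>\<theta> i\<close> exceeds \<open>\<theta>0\<close>, replacing one summand on the ray of
slope \<open>tan \<theta>0\<close> by a steeper one leaves the cone of slope \<open>tan \<theta>0\<close>.\<close>

lemma Min_image_lessThan:
  fixes f :: "nat \<Rightarrow> 'a::linorder"
  assumes "n \<ge> 1"
  shows "\<forall>i<n. Min (f ` {..<n}) \<le> f i" "\<exists>i<n. Min (f ` {..<n}) = f i"
proof -
  have "f 0 \<in> f ` {..<n}"
    using assms by simp
  then show "\<exists>i<n. Min (f ` {..<n}) = f i"
    using Min_in[of "f ` {..<n}"] by blast
qed simp

lemma mem_feas_iff_norm:
  assumes "0 \<le> S"
  shows "(P, Q) \<in> feas S Pb \<theta> \<longleftrightarrow>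
    0 \<le> P \<and> P \<le> S * Pb \<and> norm (P, Q) \<le> S \<and> (\<theta> = pi / 2 \<or> \<bar>Q\<bar> \<le> tan \<theta> * P)"
proof -
  have "Q\<^sup>2 \<le> S\<^sup>2 - P\<^sup>2 \<longleftrightarrow> sqrt (P\<^sup>2 + Q\<^sup>2) \<le> sqrt (S\<^sup>2)"
    by (subst real_sqrt_le_iff) linarith
  also have "\<dots> \<longleftrightarrow> norm (P, Q) \<le> S"
    using assms by (simp add: norm_Pair)
  finally show ?thesis
    by (auto simp: feas_def)
qed

lemma feas_mono:
  assumes "0 \<le> S0" "S0 \<le> S" "0 \<le> Pb0" "Pb0 \<le> Pb"
    and "0 \<le> \<theta>0" "\<theta>0 \<le> \<theta>" "\<theta> \<le> pi / 2"
  shows "feas S0 Pb0 \<theta>0 \<subseteq> feas S Pb \<theta>"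
proof clarify
  fix P Q assume PQ: "(P, Q) \<in> feas S0 Pb0 \<theta>0"
  then have "0 \<le> P" by (simp add: feas_def)
  have "S0 * Pb0 \<le> S * Pb"
    using assms by (simp add: mult_mono)
  moreover have "\<bar>Q\<bar> \<le> tan \<theta> * P" if "\<theta> \<noteq> pi / 2"
  proof -
    have "\<theta>0 \<noteq> pi / 2"
      using that assms by linarith
    then have "\<bar>Q\<bar> \<le> tan \<theta>0 * P"
      using PQ by (simp add: feas_def)
    also have "\<dots> \<le> tan \<theta> * P"
      using assms that \<open>0 \<le> P\<close> by (intro mult_right_mono tan_mono_le) auto
    finally show ?thesis .
  qed
  ultimately show "(P, Q) \<in> feas S Pb \<theta>"
    using PQ assms mem_feas_iff_norm by auto
qed

lemma scaleR_mem_feas: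
  assumes "0 \<le> c" "0 \<le> S" "z \<in> feas S Pb \<theta>"
  shows "c *\<^sub>R z \<in> feas (c * S) Pb \<theta>"
proof (cases z)
  case (Pair P Q)
  have "norm (c *\<^sub>R (P, Q)) \<le> c * S" if "norm (P, Q) \<le> S"
    using norm_scaleR[of c "(P, Q)"] mult_left_mono[OF that \<open>0 \<le> c\<close>] \<open>0 \<le> c\<close> by simp
  moreover have "\<bar>c * Q\<bar> \<le> tan \<theta> * (c * P)" if "\<bar>Q\<bar> \<le> tan \<theta> * P"
    using mult_left_mono[OF that \<open>0 \<le> c\<close>] \<open>0 \<le> c\<close> by (simp add: abs_mult algebra_simps)
  ultimately show ?thesis
    using assms Pair by (auto simp: mem_feas_iff_norm mult_left_mono mult.assoc)
qed

lemma sum_mem_feas: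
  fixes x :: "nat \<Rightarrow> real \<times> real"
  assumes "\<And>i. i < n \<Longrightarrow> 0 \<le> S i" "\<And>i. i < n \<Longrightarrow> x i \<in> feas (S i) Pb \<theta>"
  shows "(\<Sum>i<n. x i) \<in> feas (\<Sum>i<n. S i) Pb \<theta>"
proof -
  have x: "0 \<le> fst (x i) \<and> fst (x i) \<le> S i * Pb \<and> norm (x i) \<le> S i \<and>
      (\<theta> = pi / 2 \<or> \<bar>snd (x i)\<bar> \<le> tan \<theta> * fst (x i))" if "i < n" for i
    using assms[OF that] mem_feas_iff_norm[of "S i" "fst (x i)" "snd (x i)"] by simp
  have "norm (\<Sum>i<n. x i) \<le> (\<Sum>i<n. norm (x i))"
    by (rule norm_sum)
  also have "\<dots> \<le> (\<Sum>i<n. S i)"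
    using x by (intro sum_mono) auto
  finally have "norm (\<Sum>i<n. x i) \<le> (\<Sum>i<n. S i)" .
  moreover have "\<bar>\<Sum>i<n. snd (x i)\<bar> \<le> tan \<theta> * (\<Sum>i<n. fst (x i))" if "\<theta> \<noteq> pi / 2"
  proof -
    have "\<bar>\<Sum>i<n. snd (x i)\<bar> \<le> (\<Sum>i<n. \<bar>snd (x i)\<bar>)"
      by (rule sum_abs)
    also have "\<dots> \<le> (\<Sum>i<n. tan \<theta> * fst (x i))"
      using x that by (intro sum_mono) auto
    finally show ?thesis
      by (simp add: sum_distrib_left)
  qed
  moreover have "0 \<le> (\<Sum>i<n. fst (x i))" "(\<Sum>i<n. fst (x i)) \<le> (\<Sum>i<n. S i) * Pb"
    using x by (auto simp: sum_distrib_right intro: sum_nonneg sum_mono)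
  moreover have "(\<Sum>i<n. x i) = (\<Sum>i<n. fst (x i), \<Sum>i<n. snd (x i))"
    by (simp add: prod_eq_iff fst_sum snd_sum)
  moreover have "0 \<le> (\<Sum>i<n. S i)"
    using assms(1) by (auto intro: sum_nonneg)
  ultimately show ?thesis
    by (auto simp: mem_feas_iff_norm)
qed

lemma minkowski_sum_mono:
  assumes "\<And>i. i < n \<Longrightarrow> A i \<subseteq> B i"
  shows "minkowski_sum n A \<subseteq> minkowski_sum n B"
  using assms unfolding minkowski_sum_def by blast

lemma minkowski_sum_const_feas:
  assumes "n \<ge> 1" "0 \<le> S"
  shows "minkowski_sum n (\<lambda>_. feas S Pb \<theta>) = feas (real n * S) Pb \<theta>"
proof
  show "minkowski_sum n (\<lambda>_. feas S Pb \<theta>) \<subseteq> feas (real n * S) Pb \<theta>"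
    using sum_mem_feas[of n "\<lambda>_. S"] assms unfolding minkowski_sum_def by auto
next
  show "feas (real n * S) Pb \<theta> \<subseteq> minkowski_sum n (\<lambda>_. feas S Pb \<theta>)"
  proof
    fix z assume "z \<in> feas (real n * S) Pb \<theta>"
    then have "(1 / real n) *\<^sub>R z \<in> feas S Pb \<theta>"
      using scaleR_mem_feas[of "1 / real n" "real n * S"] assms by simp
    moreover have "z = (\<Sum>i<n. (1 / real n) *\<^sub>R z)"
      using assms by (simp add: sum_constant_scaleR)
    ultimately show "z \<in> minkowski_sum n (\<lambda>_. feas S Pb \<theta>)"
      unfolding minkowski_sum_def by blast
  qed
qed

lemma max_real_power_mem_feas:
  assumes "0 \<le> S" "0 \<le> Pb" "Pb \<le> 1" "0 \<le> \<theta>" "\<theta> \<le> pi / 2"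
  shows "(S * Pb, 0) \<in> feas S Pb \<theta>"
proof -
  have "0 \<le> tan \<theta> * (S * Pb)" if "\<theta> \<noteq> pi / 2"
    using assms that by (intro mult_nonneg_nonneg tan_pos_pi2_le) auto
  moreover have "S * Pb \<le> S"
    using assms by (simp add: mult_left_le)
  ultimately show ?thesis
    using assms by (auto simp: mem_feas_iff_norm norm_Pair)
qed

lemma ray_point_mem_feas:
  assumes "0 \<le> \<theta>" "\<theta> < pi / 2" "0 \<le> p" "p \<le> S * Pb" "p * (1 + tan \<theta>) \<le> S"
  shows "(p, tan \<theta> * p) \<in> feas S Pb \<theta>"
proof -
  have "0 \<le> tan \<theta>"
    using assms by (intro tan_pos_pi2_le)
  then have "p\<^sup>2 + (tan \<theta> * p)\<^sup>2 \<le> (p * (1 + tan \<theta>))\<^sup>2"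
    using \<open>0 \<le> p\<close> by (simp add: power2_eq_square algebra_simps)
  also have "\<dots> \<le> S\<^sup>2"
    using assms \<open>0 \<le> tan \<theta>\<close> by (intro power_mono) auto
  finally show ?thesis
    using assms \<open>0 \<le> tan \<theta>\<close> by (auto simp: feas_def abs_mult)
qed

lemma minkowski_sum_feas_subset_imp_eq_rating:
  assumes "0 < S0" "0 < Pb0"
    and "\<And>i. i < n \<Longrightarrow> S0 \<le> S i \<and> Pb0 \<le> Pb i \<and> Pb i \<le> 1 \<and> 0 \<le> \<theta> i \<and> \<theta> i \<le> pi / 2"
    and "minkowski_sum n (\<lambda>i. feas (S i) (Pb i) (\<theta> i)) \<subseteq> feas (real n * S0) Pb0 \<theta>0"
  shows "\<forall>i<n. S i = S0 \<and> Pb i = Pb0"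
proof (intro allI impI)
  fix i assume "i < n"
  have "(S k * Pb k, 0) \<in> feas (S k) (Pb k) (\<theta> k)" if "k < n" for k
    using assms(1,2) assms(3)[OF that] by (intro max_real_power_mem_feas) auto
  then have "(\<Sum>i<n. (S i * Pb i, 0 :: real)) \<in> minkowski_sum n (\<lambda>i. feas (S i) (Pb i) (\<theta> i))"
    unfolding minkowski_sum_def by blast
  then have "fst (\<Sum>i<n. (S i * Pb i, 0 :: real)) \<le> real n * S0 * Pb0"
    using assms(4) by (auto simp: feas_def)
  then have sum_le: "(\<Sum>i<n. S i * Pb i) \<le> (\<Sum>i<n. S0 * Pb0)"
    by (simp add: fst_sum mult.assoc)
  have le: "S0 * Pb0 \<le> S k * Pb0" "S k * Pb0 \<le> S k * Pb k" if "k < n" for k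
    using assms(1,2) assms(3)[OF that] by (auto intro: mult_right_mono mult_left_mono)
  then have le_prod: "S0 * Pb0 \<le> S k * Pb k" if "k < n" for k
    using that by (meson order_trans)
  have sum_eq: "(\<Sum>i<n. S0 * Pb0) = (\<Sum>i<n. S i * Pb i)"
    using sum_le sum_mono[of "{..<n}" "\<lambda>_. S0 * Pb0" "\<lambda>i. S i * Pb i"] le_prod by force
  have "S0 * Pb0 = S i * Pb i"
    using sum_mono_inv[OF sum_eq, of i] le_prod \<open>i < n\<close> by simp
  with le[OF \<open>i < n\<close>] have "S i * Pb0 = S0 * Pb0" "S i * Pb i = S i * Pb0"
    by linarith+
  then show "S i = S0 \<and> Pb i = Pb0"
    using assms(1,2) by simp
qed

lemma minkowski_sum_feas_subset_imp_eq_angle: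
  assumes "0 < S0" "0 < Pb0" "0 \<le> \<theta>0"
    and "\<And>i. i < n \<Longrightarrow> S0 \<le> S i \<and> Pb0 \<le> Pb i \<and> \<theta>0 \<le> \<theta> i \<and> \<theta> i \<le> pi / 2"
    and "minkowski_sum n (\<lambda>i. feas (S i) (Pb i) (\<theta> i)) \<subseteq> feas (real n * S0) Pb0 \<theta>0"
  shows "\<forall>i<n. \<theta> i = \<theta>0"
proof (rule ccontr)
  assume "\<not> ?thesis"
  then obtain j where j: "j < n" "\<theta>0 < \<theta> j"
    using assms(4) by force
  \<comment> \<open>A slope strictly between \<open>\<theta>0\<close> and \<open>\<theta> j\<close>, below \<open>pi / 2\<close> even if \<open>\<theta> j = pi / 2\<close>.\<close>
  define \<theta>' where "\<theta>' = (\<theta>0 + \<theta> j) / 2"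
  have \<theta>': "\<theta>0 < \<theta>'" "\<theta>' \<le> \<theta> j" "\<theta>' < pi / 2"
    using j assms(4)[OF j(1)] by (auto simp: \<theta>'_def)
  have tan_less: "tan \<theta>0 < tan \<theta>'"
    using assms(3) \<theta>' by (intro tan_monotone) auto
  have "0 \<le> tan \<theta>0"
    using assms(3) \<theta>' by (intro tan_pos_pi2_le) auto
  define p where "p = min (S0 * Pb0) (S0 / (1 + tan \<theta>'))"
  have "0 < 1 + tan \<theta>'"
    using \<open>0 \<le> tan \<theta>0\<close> tan_less by linarith
  then have p: "0 < p" "p \<le> S0 * Pb0" "p * (1 + tan \<theta>') \<le> S0"
    using assms(1,2) by (auto simp: p_def min_le_iff_disj pos_le_divide_eq[symmetric])
  have "p * (1 + tan \<theta>0) \<le> p * (1 + tan \<theta>')"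
    using p(1) tan_less by simp
  also have "\<dots> \<le> S0"
    by (rule p(3))
  finally have ray0: "(p, tan \<theta>0 * p) \<in> feas S0 Pb0 \<theta>0"
    using assms(3) \<theta>' p by (intro ray_point_mem_feas) auto
  have ray': "(p, tan \<theta>' * p) \<in> feas S0 Pb0 \<theta>'"
    using assms(3) \<theta>' p by (intro ray_point_mem_feas) auto
  define k where "k i = (if i = j then tan \<theta>' else tan \<theta>0)" for i
  have "(p, k i * p) \<in> feas (S i) (Pb i) (\<theta> i)" if "i < n" for i
  proof (cases "i = j")
    case True
    have "feas S0 Pb0 \<theta>' \<subseteq> feas (S j) (Pb j) (\<theta> j)"
      using assms(1-3) assms(4)[OF j(1)] \<theta>' by (intro feas_mono) auto
    with True ray' show ?thesis
      by (auto simp: k_def)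
  next
    case False
    have "feas S0 Pb0 \<theta>0 \<subseteq> feas (S i) (Pb i) (\<theta> i)"
      using assms(1-3) assms(4)[OF that] by (intro feas_mono) auto
    with False ray0 show ?thesis
      by (auto simp: k_def)
  qed
  then have "(\<Sum>i<n. (p, k i * p)) \<in> minkowski_sum n (\<lambda>i. feas (S i) (Pb i) (\<theta> i))"
    unfolding minkowski_sum_def by blast
  moreover have "(\<Sum>i<n. (p, k i * p)) = (real n * p, \<Sum>i<n. k i * p)"
    by (simp add: prod_eq_iff fst_sum snd_sum)
  ultimately have "(real n * p, \<Sum>i<n. k i * p) \<in> feas (real n * S0) Pb0 \<theta>0"
    using assms(5) by auto
  then have "(\<Sum>i<n. k i * p) \<le> tan \<theta>0 * (real n * p)"
    using \<theta>' by (simp add: feas_def abs_le_iff)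
  moreover have "(\<Sum>i<n. tan \<theta>0 * p) < (\<Sum>i<n. k i * p)"
    using j p(1) tan_less by (intro sum_strict_mono_ex1) (auto simp: k_def)
  ultimately show False
    by (simp add: algebra_simps)
qed

theorem theorem2:
  fixes nd :: nat and S Pbar \<theta> :: "nat \<Rightarrow> real"
  assumes "nd \<ge> 1"
    and "\<And>i. i < nd \<Longrightarrow> S i > 0"
    and "\<And>i. i < nd \<Longrightarrow> 0 < Pbar i \<and> Pbar i \<le> 1"
    and "\<And>i. i < nd \<Longrightarrow> 0 \<le> \<theta> i \<and> \<theta> i \<le> pi / 2"
  defines "S0 \<equiv> Min (S ` {..<nd})"
    and "P0 \<equiv> Min (Pbar ` {..<nd})"
    and "\<theta>0 \<equiv> Min (\<theta> ` {..<nd})"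
  shows "feas (real nd * S0) P0 \<theta>0 \<subseteq> minkowski_sum nd (\<lambda>i. feas (S i) (Pbar i) (\<theta> i))
       \<and> (feas (real nd * S0) P0 \<theta>0 = minkowski_sum nd (\<lambda>i. feas (S i) (Pbar i) (\<theta> i))
          \<longleftrightarrow> (\<forall>i<nd. S i = S0 \<and> Pbar i = P0 \<and> \<theta> i = \<theta>0))"
proof -
  note S0 = Min_image_lessThan[OF assms(1), of S, folded S0_def]
    and P0 = Min_image_lessThan[OF assms(1), of Pbar, folded P0_def]
    and \<theta>0 = Min_image_lessThan[OF assms(1), of \<theta>, folded \<theta>0_def]
  have pos: "0 < S0" "0 < P0" "0 \<le> \<theta>0"
    using S0(2) P0(2) \<theta>0(2) assms(2-4) by force+
  have bounds: "S0 \<le> S i \<and> P0 \<le> Pbar i \<and> Pbar i \<le> 1 \<and> 0 \<le> \<theta> i \<and> \<theta>0 \<le> \<theta> i \<and> \<theta> i \<le> pi / 2"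
    if "i < nd" for i
    using S0(1) P0(1) \<theta>0(1) assms(3,4) that by blast
  let ?M = "minkowski_sum nd (\<lambda>i. feas (S i) (Pbar i) (\<theta> i))"
  have copies: "feas (real nd * S0) P0 \<theta>0 = minkowski_sum nd (\<lambda>_. feas S0 P0 \<theta>0)"
    using minkowski_sum_const_feas assms(1) pos by simp
  have "feas (real nd * S0) P0 \<theta>0 \<subseteq> ?M"
    unfolding copies using pos bounds by (intro minkowski_sum_mono feas_mono) auto
  moreover have "?M \<subseteq> feas (real nd * S0) P0 \<theta>0 \<longleftrightarrow> (\<forall>i<nd. S i = S0 \<and> Pbar i = P0 \<and> \<theta> i = \<theta>0)"
  proof
    assume "?M \<subseteq> feas (real nd * S0) P0 \<theta>0"
    then show "\<forall>i<nd. S i = S0 \<and> Pbar i = P0 \<and> \<theta> i = \<theta>0"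
      using minkowski_sum_feas_subset_imp_eq_rating[of S0 P0 nd S Pbar \<theta>]
        minkowski_sum_feas_subset_imp_eq_angle[of S0 P0 \<theta>0 nd S Pbar \<theta>] pos bounds
      by blast
  qed (simp add: copies minkowski_sum_mono)
  ultimately show ?thesis
    by blast
qed

end
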